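(* Let $X$ be a connected $G$-complex on which $G$ acts properly and cocompactly. Then any $G$-equivariant immersion $\phi\colon X\to X$ is an isomorphism.
   Context: Complexes are combinatorial 2-complexes and maps are combinatorial; a $G$-complex has a cellular $G$-action without inversions. An immersion is a locally injective combinatorial map. *)

theory Defs
  imports "HOL-Algebra.Group"
begin

text \<open>Each n-gon face contributes 2n oriented sides (each
geometric side with both orientations); cx_nx is the successor along the oriented
boundary cycle, cx_fl reverses the orientation of a side, cx_lb is the oriented edge
to which the side is attached.\<close>

record ('v,'e,'f,'s) cplx =
  cx_V  :: "'v set"
  cx_E  :: "'e set"
  cx_F  :: "'f set"
  cx_S  :: "'s set"
  cx_rv :: "'e \<Rightarrow> 'e"
  cx_src :: "'e \<Rightarrow> 'v"
  cx_fc :: "'s \<Rightarrow> 'f"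
  cx_nx :: "'s \<Rightarrow> 's"
  cx_fl :: "'s \<Rightarrow> 's"
  cx_lb :: "'s \<Rightarrow> 'e"

definition cx_tgt :: "('v,'e,'f,'s,'z) cplx_scheme \<Rightarrow> 'e \<Rightarrow> 'v" where
  "cx_tgt X e = cx_src X (cx_rv X e)"

definition complex2 :: "('v,'e,'f,'s,'z) cplx_scheme \<Rightarrow> bool" where
  "complex2 X \<longleftrightarrow>
     (\<forall>e\<in>cx_E X. cx_rv X e \<in> cx_E X \<and> cx_rv X (cx_rv X e) = e \<and> cx_rv X e \<noteq> e
                 \<and> cx_src X e \<in> cx_V X) \<and>
     (\<forall>s\<in>cx_S X. cx_nx X s \<in> cx_S X \<and> cx_fl X s \<in> cx_S X \<and> cx_fc X s \<in> cx_F X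
                 \<and> cx_lb X s \<in> cx_E X) \<and>
     bij_betw (cx_nx X) (cx_S X) (cx_S X) \<and>
     (\<forall>s\<in>cx_S X. cx_fl X (cx_fl X s) = s \<and> cx_fl X s \<noteq> s
                 \<and> cx_lb X (cx_fl X s) = cx_rv X (cx_lb X s)
                 \<and> cx_nx X (cx_fl X (cx_nx X s)) = cx_fl X s
                 \<and> cx_fc X (cx_nx X s) = cx_fc X s \<and> cx_fc X (cx_fl X s) = cx_fc X s
                 \<and> cx_src X (cx_lb X (cx_nx X s)) = cx_tgt X (cx_lb X s)) \<and>
     (\<forall>f\<in>cx_F X. \<exists>s\<in>cx_S X. cx_fc X s = f \<and> (\<exists>n>0. (cx_nx X ^^ n) s = s)
                 \<and> {t\<in>cx_S X. cx_fc X t = f}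
                     = {(cx_nx X ^^ k) s | k. True} \<union> {cx_fl X ((cx_nx X ^^ k) s) | k. True}
                 \<and> cx_fl X s \<notin> {(cx_nx X ^^ k) s | k. True})"

record ('v,'e,'f,'s,'w,'d,'g,'t) cmor =
  mv :: "'v \<Rightarrow> 'w"
  me :: "'e \<Rightarrow> 'd"
  mf :: "'f \<Rightarrow> 'g"
  ms :: "'s \<Rightarrow> 't"

definition cmap :: "('v,'e,'f,'s,'z) cplx_scheme \<Rightarrow> ('w,'d,'g,'t,'y) cplx_scheme
                     \<Rightarrow> ('v,'e,'f,'s,'w,'d,'g,'t) cmor \<Rightarrow> bool" where
  "cmap X Y \<phi> \<longleftrightarrow>
     mv \<phi> ` cx_V X \<subseteq> cx_V Y \<and> me \<phi> ` cx_E X \<subseteq> cx_E Y \<and>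
     mf \<phi> ` cx_F X \<subseteq> cx_F Y \<and> ms \<phi> ` cx_S X \<subseteq> cx_S Y \<and>
     (\<forall>e\<in>cx_E X. cx_src Y (me \<phi> e) = mv \<phi> (cx_src X e)
                 \<and> me \<phi> (cx_rv X e) = cx_rv Y (me \<phi> e)) \<and>
     (\<forall>s\<in>cx_S X. cx_fc Y (ms \<phi> s) = mf \<phi> (cx_fc X s)
                 \<and> ms \<phi> (cx_nx X s) = cx_nx Y (ms \<phi> s)
                 \<and> ms \<phi> (cx_fl X s) = cx_fl Y (ms \<phi> s)
                 \<and> cx_lb Y (ms \<phi> s) = me \<phi> (cx_lb X s)) \<and>
     (\<forall>f\<in>cx_F X. bij_betw (ms \<phi>) {s\<in>cx_S X. cx_fc X s = f}
                                  {t\<in>cx_S Y. cx_fc Y t = mf \<phi> f})"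

text \<open>Immersion = locally injective combinatorial map: injective on the edge-ends and on
the 2-cell corners (oriented sides starting) at every vertex.\<close>

definition immersion :: "('v,'e,'f,'s,'z) cplx_scheme \<Rightarrow> ('w,'d,'g,'t,'y) cplx_scheme
                     \<Rightarrow> ('v,'e,'f,'s,'w,'d,'g,'t) cmor \<Rightarrow> bool" where
  "immersion X Y \<phi> \<longleftrightarrow> cmap X Y \<phi> \<and>
     (\<forall>v\<in>cx_V X. inj_on (me \<phi>) {e\<in>cx_E X. cx_src X e = v}
                \<and> inj_on (ms \<phi>) {s\<in>cx_S X. cx_src X (cx_lb X s) = v})"

definition hcomp :: "('w,'d,'g,'t,'a,'b,'c,'u) cmor \<Rightarrow> ('v,'e,'f,'s,'w,'d,'g,'t) cmor
                     \<Rightarrow> ('v,'e,'f,'s,'a,'b,'c,'u) cmor" where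
  "hcomp \<psi> \<phi> = \<lparr>mv = mv \<psi> \<circ> mv \<phi>, me = me \<psi> \<circ> me \<phi>, mf = mf \<psi> \<circ> mf \<phi>, ms = ms \<psi> \<circ> ms \<phi>\<rparr>"

definition hid :: "('v,'e,'f,'s,'v,'e,'f,'s) cmor" where
  "hid = \<lparr>mv = id, me = id, mf = id, ms = id\<rparr>"

definition agree_on :: "('v,'e,'f,'s,'z) cplx_scheme \<Rightarrow> ('v,'e,'f,'s,'w,'d,'g,'t) cmor
                     \<Rightarrow> ('v,'e,'f,'s,'w,'d,'g,'t) cmor \<Rightarrow> bool" where
  "agree_on X \<phi> \<psi> \<longleftrightarrow>
     (\<forall>v\<in>cx_V X. mv \<phi> v = mv \<psi> v) \<and> (\<forall>e\<in>cx_E X. me \<phi> e = me \<psi> e) \<and>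
     (\<forall>f\<in>cx_F X. mf \<phi> f = mf \<psi> f) \<and> (\<forall>s\<in>cx_S X. ms \<phi> s = ms \<psi> s)"

definition cx_iso :: "('v,'e,'f,'s,'z) cplx_scheme \<Rightarrow> ('w,'d,'g,'t,'y) cplx_scheme
                     \<Rightarrow> ('v,'e,'f,'s,'w,'d,'g,'t) cmor \<Rightarrow> bool" where
  "cx_iso X Y \<phi> \<longleftrightarrow> cmap X Y \<phi> \<and>
     (\<exists>\<psi>. cmap Y X \<psi> \<and> agree_on X (hcomp \<psi> \<phi>) hid \<and> agree_on Y (hcomp \<phi> \<psi>) hid)"

definition cx_connected :: "('v,'e,'f,'s,'z) cplx_scheme \<Rightarrow> bool" where
  "cx_connected X \<longleftrightarrow>
     (\<forall>u\<in>cx_V X. \<forall>v\<in>cx_V X.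
        (u, v) \<in> {(cx_src X e, cx_tgt X e) | e. e \<in> cx_E X}\<^sup>*)"

definition G_complex :: "('g,'x) monoid_scheme \<Rightarrow> ('v,'e,'f,'s,'z) cplx_scheme
                     \<Rightarrow> ('g \<Rightarrow> ('v,'e,'f,'s,'v,'e,'f,'s) cmor) \<Rightarrow> bool" where
  "G_complex G X act \<longleftrightarrow> group G \<and> complex2 X \<and>
     (\<forall>g\<in>carrier G. cmap X X (act g)) \<and>
     agree_on X (act \<one>\<^bsub>G\<^esub>) hid \<and>
     (\<forall>g\<in>carrier G. \<forall>h\<in>carrier G. agree_on X (act (g \<otimes>\<^bsub>G\<^esub> h)) (hcomp (act g) (act h))) \<and>
     (\<forall>g\<in>carrier G. \<forall>e\<in>cx_E X. me (act g) e \<noteq> cx_rv X e)"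

definition proper_action :: "('g,'x) monoid_scheme \<Rightarrow> ('v,'e,'f,'s,'z) cplx_scheme
                     \<Rightarrow> ('g \<Rightarrow> ('v,'e,'f,'s,'v,'e,'f,'s) cmor) \<Rightarrow> bool" where
  "proper_action G X act \<longleftrightarrow>
     (\<forall>v\<in>cx_V X. finite {g\<in>carrier G. mv (act g) v = v}) \<and>
     (\<forall>e\<in>cx_E X. finite {g\<in>carrier G. me (act g) e = e}) \<and>
     (\<forall>f\<in>cx_F X. finite {g\<in>carrier G. mf (act g) f = f})"

definition cocompact_action :: "('g,'x) monoid_scheme \<Rightarrow> ('v,'e,'f,'s,'z) cplx_scheme
                     \<Rightarrow> ('g \<Rightarrow> ('v,'e,'f,'s,'v,'e,'f,'s) cmor) \<Rightarrow> bool" where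
  "cocompact_action G X act \<longleftrightarrow>
     finite ((\<lambda>v. (\<lambda>g. mv (act g) v) ` carrier G) ` cx_V X) \<and>
     finite ((\<lambda>e. (\<lambda>g. me (act g) e) ` carrier G) ` cx_E X) \<and>
     finite ((\<lambda>f. (\<lambda>g. mf (act g) f) ` carrier G) ` cx_F X)"

definition equivariant :: "('g,'x) monoid_scheme \<Rightarrow> ('v,'e,'f,'s,'z) cplx_scheme
                     \<Rightarrow> ('g \<Rightarrow> ('v,'e,'f,'s,'v,'e,'f,'s) cmor)
                     \<Rightarrow> ('v,'e,'f,'s,'v,'e,'f,'s) cmor \<Rightarrow> bool" where
  "equivariant G X act \<phi> \<longleftrightarrow>
     (\<forall>g\<in>carrier G. agree_on X (hcomp \<phi> (act g)) (hcomp (act g) \<phi>))"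

end

theory Submission
  imports Defs
begin

text \<open>
  Call a point \<open>x\<close> of a \<open>G\<close>-set orbit-periodic under an equivariant self-map \<open>p\<close> if
  \<open>p\<^sup>k x = g x\<close> for some \<open>k > 0\<close> and \<open>g \<in> G\<close>. With finitely many orbits, every point
  reaches an orbit-periodic one under iteration, and an injective \<open>p\<close> makes every point
  orbit-periodic. Conversely, if all points are orbit-periodic, then \<open>p\<close> is surjective, and it is
  injective because it cannot enlarge the finite stabilizers.

  For an equivariant immersion \<open>\<phi>\<close>, orbit-periodicity spreads along edges: the star of a
  vertex is finite (proper and cocompact action), and if \<open>\<phi>\<^sup>k v = g v\<close> then \<open>g\<^sup>-\<^sup>1 \<circ> \<phi>\<^sup>k\<close>
  maps the star of \<open>v\<close> injectively into itself, hence permutes it. By connectedness \<open>\<phi>\<close> is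
  bijective on vertices and edges; local injectivity then makes it injective on sides and faces,
  injective on faces implies surjective on faces, hence on sides, and the inverse is again a
  combinatorial map.
\<close>

section \<open>Equivariant self-maps of proper cocompact \<open>G\<close>-sets\<close>

lemma exists_less_eq_if_finite_range:
  assumes "finite (range (f :: nat \<Rightarrow> 'a))"
  obtains i j where "i < j" "f i = f j"
proof -
  have "\<not> inj f" using assms finite_imageD infinite_UNIV_nat by blast
  then show ?thesis using that unfolding inj_def by (metis linorder_neq_iff)
qed

lemma funpow_closed: "f ` A \<subseteq> A \<Longrightarrow> x \<in> A \<Longrightarrow> (f ^^ n) x \<in> A"
  by (induction n) auto

lemma funpow_eq_funpow_pred: "k > 0 \<Longrightarrow> (f ^^ k) x = (f ^^ (k - 1)) (f x)"
  using funpow_Suc_right[of "k - 1" f] by simp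

lemma inj_on_funpow: "f ` A \<subseteq> A \<Longrightarrow> inj_on f A \<Longrightarrow> inj_on (f ^^ n) A"
proof (induction n)
  case (Suc n)
  then have "inj_on (f \<circ> (f ^^ n)) A"
    by (intro comp_inj_on) (auto intro: inj_on_subset funpow_closed)
  then show ?case by (simp add: comp_def)
qed simp

lemma inj_on_finite_funpow_periodic:
  assumes "finite B" "f ` B \<subseteq> B" "inj_on f B" "x \<in> B"
  obtains m where "m > 0" "(f ^^ m) x = x"
proof -
  have "range (\<lambda>n. (f ^^ n) x) \<subseteq> B" using funpow_closed[OF assms(2,4)] by auto
  then obtain i j where ij: "i < j" "(f ^^ i) x = (f ^^ j) x"
    using assms(1) exists_less_eq_if_finite_range by (metis finite_subset)
  have "(f ^^ i) ((f ^^ (j - i)) x) = (f ^^ i) x"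
    using ij by (simp flip: funpow_add[unfolded comp_def, THEN fun_cong])
  then have "(f ^^ (j - i)) x = x"
    using inj_onD[OF inj_on_funpow[OF assms(2,3)]] funpow_closed[OF assms(2,4)] assms(4) by blast
  with ij show ?thesis by (intro that[of "j - i"]) auto
qed

locale group_act = group G for G :: "('g,'b) monoid_scheme" (structure) +
  fixes A :: "'a set" and \<alpha> :: "'g \<Rightarrow> 'a \<Rightarrow> 'a"
  assumes act_closed: "g \<in> carrier G \<Longrightarrow> x \<in> A \<Longrightarrow> \<alpha> g x \<in> A"
    and act_one: "x \<in> A \<Longrightarrow> \<alpha> \<one> x = x"
    and act_mult: "g \<in> carrier G \<Longrightarrow> h \<in> carrier G \<Longrightarrow> x \<in> A \<Longrightarrow> \<alpha> (g \<otimes> h) x = \<alpha> g (\<alpha> h x)"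
begin

definition orbit :: "'a \<Rightarrow> 'a set" where
  "orbit x = (\<lambda>g. \<alpha> g x) ` carrier G"

definition stabilizer :: "'a \<Rightarrow> 'g set" where
  "stabilizer x = {g \<in> carrier G. \<alpha> g x = x}"

lemma act_inv_act [simp]: "g \<in> carrier G \<Longrightarrow> x \<in> A \<Longrightarrow> \<alpha> (inv g) (\<alpha> g x) = x"
  by (metis act_mult act_one inv_closed l_inv)

lemma inj_on_act: "g \<in> carrier G \<Longrightarrow> inj_on (\<alpha> g) A"
  by (metis act_inv_act inj_onI)

lemma orbit_eqD:
  assumes "y \<in> A" "orbit x = orbit y"
  obtains g where "g \<in> carrier G" "y = \<alpha> g x"
proof -
  have "y \<in> orbit y" unfolding orbit_def using act_one assms(1) by force
  with assms(2) show ?thesis using that unfolding orbit_def by blast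
qed

lemma stabilizer_act_conj:
  assumes "g \<in> carrier G" "x \<in> A" "h \<in> stabilizer (\<alpha> g x)"
  shows "inv g \<otimes> h \<otimes> g \<in> stabilizer x"
  using assms by (auto simp: stabilizer_def act_mult act_closed)

end

locale proper_cocompact_act = group_act +
  assumes proper: "x \<in> A \<Longrightarrow> finite {g \<in> carrier G. \<alpha> g x = x}"
    and cocompact: "finite ((\<lambda>x. (\<lambda>g. \<alpha> g x) ` carrier G) ` A)"
begin

lemma finite_stabilizer: "x \<in> A \<Longrightarrow> finite (stabilizer x)"
  unfolding stabilizer_def using proper .

lemma finite_orbits: "finite (orbit ` A)"
  using cocompact by (simp add: orbit_def[abs_def])

lemma card_stabilizer_act_le:
  assumes "g \<in> carrier G" "x \<in> A"
  shows "card (stabilizer (\<alpha> g x)) \<le> card (stabilizer x)"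
proof (rule card_inj_on_le)
  show "inj_on (\<lambda>h. inv g \<otimes> h \<otimes> g) (stabilizer (\<alpha> g x))"
    using assms by (intro inj_onI) (auto simp: stabilizer_def)
qed (use assms stabilizer_act_conj finite_stabilizer in auto)

end

lemma finite_fibre_if_equivariant:
  assumes "proper_cocompact_act G A \<alpha>" "proper_cocompact_act G B \<beta>"
    and f_equivariant: "\<And>g x. g \<in> carrier G \<Longrightarrow> x \<in> A \<Longrightarrow> f (\<alpha> g x) = \<beta> g (f x)"
    and "y \<in> B"
  shows "finite {x \<in> A. f x = y}"
proof -
  interpret A: proper_cocompact_act G A \<alpha> by fact
  interpret B: proper_cocompact_act G B \<beta> by fact
  let ?F = "{x \<in> A. f x = y}"
  have orbit_piece: "{x \<in> ?F. A.orbit x = A.orbit x\<^sub>0} \<subseteq> (\<lambda>t. \<alpha> t x\<^sub>0) ` B.stabilizer y"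
    if "x\<^sub>0 \<in> ?F" for x\<^sub>0
  proof
    fix x assume x: "x \<in> {x \<in> ?F. A.orbit x = A.orbit x\<^sub>0}"
    then obtain t where t: "t \<in> carrier G" "x = \<alpha> t x\<^sub>0"
      using A.orbit_eqD[of x x\<^sub>0] by auto
    with x that f_equivariant have "\<beta> t y = y" by auto
    with t show "x \<in> (\<lambda>t. \<alpha> t x\<^sub>0) ` B.stabilizer y" unfolding B.stabilizer_def by blast
  qed
  have "finite {x \<in> ?F. A.orbit x = Q}" if Q: "Q \<in> A.orbit ` ?F" for Q
  proof -
    obtain x\<^sub>0 where x\<^sub>0: "x\<^sub>0 \<in> ?F" "Q = A.orbit x\<^sub>0" using Q by blast
    have "finite ((\<lambda>t. \<alpha> t x\<^sub>0) ` B.stabilizer y)"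
      using B.finite_stabilizer \<open>y \<in> B\<close> by blast
    then show ?thesis using orbit_piece[OF x\<^sub>0(1)] x\<^sub>0(2) by (blast intro: finite_subset)
  qed
  moreover have "finite (A.orbit ` ?F)"
    using A.finite_orbits by (rule finite_subset[rotated]) auto
  moreover have "?F = (\<Union>Q \<in> A.orbit ` ?F. {x \<in> ?F. A.orbit x = Q})" by blast
  ultimately show ?thesis by (metis (no_types, lifting) finite_UN_I)
qed

locale equivariant_endo = proper_cocompact_act G A \<alpha>
  for G :: "('g,'b) monoid_scheme" (structure) and A :: "'a set" and \<alpha> +
  fixes p :: "'a \<Rightarrow> 'a"
  assumes p_closed: "x \<in> A \<Longrightarrow> p x \<in> A"
    and p_equivariant: "g \<in> carrier G \<Longrightarrow> x \<in> A \<Longrightarrow> p (\<alpha> g x) = \<alpha> g (p x)"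
begin

definition orbit_periodic :: "'a \<Rightarrow> bool" where
  "orbit_periodic x \<longleftrightarrow> (\<exists>k>0. \<exists>g\<in>carrier G. (p ^^ k) x = \<alpha> g x)"

lemma funpow_p_closed: "x \<in> A \<Longrightarrow> (p ^^ n) x \<in> A"
  by (rule funpow_closed) (auto simp: p_closed)

lemma funpow_p_equivariant: "g \<in> carrier G \<Longrightarrow> x \<in> A \<Longrightarrow> (p ^^ n) (\<alpha> g x) = \<alpha> g ((p ^^ n) x)"
  by (induction n) (auto simp: p_equivariant funpow_p_closed)

lemma funpow_mult_if_orbit_return:
  assumes "x \<in> A" "g \<in> carrier G" "(p ^^ k) x = \<alpha> g x"
  shows "(p ^^ (k * m)) x = \<alpha> (g [^] m) x"
proof (induction m)
  case (Suc m)
  have "(p ^^ (k * Suc m)) x = (p ^^ k) ((p ^^ (k * m)) x)"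
    by (simp add: funpow_add mult.commute)
  also have "\<dots> = \<alpha> (g [^] m) (\<alpha> g x)"
    using Suc assms by (simp add: funpow_p_equivariant)
  finally show ?case using assms by (simp add: act_mult)
qed (simp add: act_one assms)

lemma funpow_twisted:
  assumes "x \<in> A" "g \<in> carrier G"
  shows "((\<lambda>y. \<alpha> g ((p ^^ k) y)) ^^ n) x = \<alpha> (g [^] n) ((p ^^ (k * n)) x)"
proof (induction n)
  case (Suc n)
  have "((\<lambda>y. \<alpha> g ((p ^^ k) y)) ^^ Suc n) x = \<alpha> g ((p ^^ k) (\<alpha> (g [^] n) ((p ^^ (k * n)) x)))"
    using Suc by simp
  also have "\<dots> = \<alpha> g (\<alpha> (g [^] n) ((p ^^ (k * Suc n)) x))"
    using assms by (simp add: funpow_p_equivariant funpow_p_closed funpow_add mult.commute)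
  also have "\<dots> = \<alpha> (g \<otimes> g [^] n) ((p ^^ (k * Suc n)) x)"
    using assms by (simp add: act_mult funpow_p_closed)
  finally show ?case using nat_pow_Suc2[OF assms(2)] by simp
qed (simp add: act_one assms)

lemma exists_orbit_collision:
  assumes "x \<in> A"
  obtains i j g where "i < j" "g \<in> carrier G" "(p ^^ j) x = \<alpha> g ((p ^^ i) x)"
proof -
  have "range (\<lambda>n. orbit ((p ^^ n) x)) \<subseteq> orbit ` A"
    using funpow_p_closed[OF assms] by auto
  then obtain i j where "i < j" "orbit ((p ^^ i) x) = orbit ((p ^^ j) x)"
    using finite_subset[OF _ finite_orbits] exists_less_eq_if_finite_range by blast
  moreover obtain g where "g \<in> carrier G" "(p ^^ j) x = \<alpha> g ((p ^^ i) x)"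
    using orbit_eqD[OF funpow_p_closed[OF assms] \<open>orbit _ = orbit _\<close>] .
  ultimately show ?thesis using that by blast
qed

lemma eventually_orbit_periodic:
  assumes "x \<in> A"
  obtains i where "orbit_periodic ((p ^^ i) x)"
proof -
  obtain i j g where ij: "i < j" "g \<in> carrier G" "(p ^^ j) x = \<alpha> g ((p ^^ i) x)"
    using exists_orbit_collision[OF assms] .
  then have "(p ^^ (j - i)) ((p ^^ i) x) = \<alpha> g ((p ^^ i) x)"
    by (simp flip: funpow_add[unfolded comp_def, THEN fun_cong])
  moreover have "j - i > 0" using ij(1) by simp
  ultimately show ?thesis using that ij(2) unfolding orbit_periodic_def by blast
qed

lemma orbit_periodic_if_inj_on:
  assumes "inj_on p A" "x \<in> A"
  shows "orbit_periodic x"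
proof -
  obtain i j g where ij: "i < j" "g \<in> carrier G" "(p ^^ j) x = \<alpha> g ((p ^^ i) x)"
    using exists_orbit_collision[OF assms(2)] .
  have p_image: "p ` A \<subseteq> A" using p_closed by blast
  from ij have "(p ^^ i) ((p ^^ (j - i)) x) = (p ^^ i) (\<alpha> g x)"
    using assms(2) by (simp add: funpow_p_equivariant flip: funpow_add[unfolded comp_def, THEN fun_cong])
  then have "(p ^^ (j - i)) x = \<alpha> g x"
    by (rule inj_onD[OF inj_on_funpow[OF p_image assms(1)]])
      (use assms(2) ij(2) in \<open>auto simp: funpow_p_closed act_closed\<close>)
  moreover have "j - i > 0" using ij(1) by simp
  ultimately show ?thesis using ij(2) unfolding orbit_periodic_def by blast
qed

lemma stabilizer_subset_funpow: "x \<in> A \<Longrightarrow> stabilizer x \<subseteq> stabilizer ((p ^^ n) x)"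
  by (auto simp: stabilizer_def simp flip: funpow_p_equivariant)

text \<open>Along a return to the orbit, the stabilizers can only grow, yet all stabilizers along
  an orbit have the same finite cardinality; so stabilizers are preserved by \<open>p\<close>.\<close>

lemma stabilizer_p_eq_if_orbit_periodic:
  assumes "x \<in> A" "orbit_periodic x"
  shows "stabilizer (p x) = stabilizer x"
proof -
  obtain k g where kg: "k > 0" "g \<in> carrier G" "(p ^^ k) x = \<alpha> g x"
    using assms(2) unfolding orbit_periodic_def by blast
  have "(p ^^ (k - 1)) (p x) = \<alpha> g x"
    using funpow_eq_funpow_pred[OF kg(1), of p x] kg(3) by simp
  then have p_sub: "stabilizer (p x) \<subseteq> stabilizer (\<alpha> g x)"
    using stabilizer_subset_funpow[of "p x" "k - 1"] p_closed assms(1) by simp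
  have x_sub: "stabilizer x \<subseteq> stabilizer (p x)"
    using stabilizer_subset_funpow[of x 1] assms(1) by simp
  have "stabilizer x = stabilizer (\<alpha> g x)"
  proof (rule card_seteq)
    show "finite (stabilizer (\<alpha> g x))" using finite_stabilizer act_closed assms(1) kg(2) by blast
    show "stabilizer x \<subseteq> stabilizer (\<alpha> g x)" using p_sub x_sub by blast
    show "card (stabilizer (\<alpha> g x)) \<le> card (stabilizer x)"
      using card_stabilizer_act_le[OF kg(2) assms(1)] .
  qed
  with p_sub x_sub show ?thesis by blast
qed

lemma inj_on_if_orbit_periodic:
  assumes "\<forall>x\<in>A. orbit_periodic x"
  shows "inj_on p A"
proof (rule inj_onI)
  fix x\<^sub>1 x\<^sub>2 assume x: "x\<^sub>1 \<in> A" "x\<^sub>2 \<in> A" "p x\<^sub>1 = p x\<^sub>2"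
  obtain k\<^sub>1 g\<^sub>1 where 1: "k\<^sub>1 > 0" "g\<^sub>1 \<in> carrier G" "(p ^^ k\<^sub>1) x\<^sub>1 = \<alpha> g\<^sub>1 x\<^sub>1"
    using assms x unfolding orbit_periodic_def by blast
  obtain k\<^sub>2 g\<^sub>2 where 2: "k\<^sub>2 > 0" "g\<^sub>2 \<in> carrier G" "(p ^^ k\<^sub>2) x\<^sub>2 = \<alpha> g\<^sub>2 x\<^sub>2"
    using assms x unfolding orbit_periodic_def by blast
  define k where "k = k\<^sub>1 * k\<^sub>2"
  have "k > 0" unfolding k_def using 1(1) 2(1) by simp
  then have "(p ^^ k) x\<^sub>1 = (p ^^ k) x\<^sub>2" using x(3) by (simp add: funpow_eq_funpow_pred)
  then have return_eq: "\<alpha> (g\<^sub>1 [^] k\<^sub>2) x\<^sub>1 = \<alpha> (g\<^sub>2 [^] k\<^sub>1) x\<^sub>2"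
    using funpow_mult_if_orbit_return[OF x(1) 1(2,3)] funpow_mult_if_orbit_return[OF x(2) 2(2,3)]
    unfolding k_def by (simp add: mult.commute)
  define c where "c = inv (g\<^sub>2 [^] k\<^sub>1) \<otimes> g\<^sub>1 [^] k\<^sub>2"
  have c: "c \<in> carrier G" unfolding c_def using 1(2) 2(2) by simp
  have "\<alpha> c x\<^sub>1 = \<alpha> (inv (g\<^sub>2 [^] k\<^sub>1)) (\<alpha> (g\<^sub>1 [^] k\<^sub>2) x\<^sub>1)"
    unfolding c_def using x(1) 1(2) 2(2) by (simp add: act_mult)
  then have x\<^sub>2: "x\<^sub>2 = \<alpha> c x\<^sub>1" using return_eq x(2) 2(2) by simp
  have "\<alpha> c (p x\<^sub>1) = p x\<^sub>1"
    using p_equivariant[OF c x(1)] x(3) x\<^sub>2 by simp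
  then have "c \<in> stabilizer (p x\<^sub>1)" using c unfolding stabilizer_def by simp
  then have "c \<in> stabilizer x\<^sub>1"
    using stabilizer_p_eq_if_orbit_periodic assms x(1) by blast
  then show "x\<^sub>1 = x\<^sub>2" using x\<^sub>2 unfolding stabilizer_def by simp
qed

lemma image_eq_if_orbit_periodic:
  assumes "\<forall>x\<in>A. orbit_periodic x"
  shows "p ` A = A"
proof
  show "p ` A \<subseteq> A" using p_closed by blast
  show "A \<subseteq> p ` A"
  proof
    fix x assume x: "x \<in> A"
    obtain k g where kg: "k > 0" "g \<in> carrier G" "(p ^^ k) x = \<alpha> g x"
      using assms x unfolding orbit_periodic_def by blast
    have "x = \<alpha> (inv g) ((p ^^ k) x)" using kg x by simp
    also have "\<dots> = (p ^^ k) (\<alpha> (inv g) x)" using kg x by (simp add: funpow_p_equivariant)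
    also have "\<dots> = p ((p ^^ (k - 1)) (\<alpha> (inv g) x))"
      using kg(1) by (cases k) auto
    finally show "x \<in> p ` A" using funpow_p_closed act_closed x kg(2) by blast
  qed
qed

lemma image_eq_if_inj_on: "inj_on p A \<Longrightarrow> p ` A = A"
  using image_eq_if_orbit_periodic orbit_periodic_if_inj_on by blast

lemma orbit_periodic_if_twisted_permutes:
  assumes "B \<subseteq> A" "finite B" "k > 0" "g \<in> carrier G"
    and "(\<lambda>y. \<alpha> g ((p ^^ k) y)) ` B \<subseteq> B" "inj_on (\<lambda>y. \<alpha> g ((p ^^ k) y)) B"
    and "y \<in> B"
  shows "orbit_periodic y"
proof -
  obtain m where m: "m > 0" "((\<lambda>y. \<alpha> g ((p ^^ k) y)) ^^ m) y = y"
    using inj_on_finite_funpow_periodic[OF assms(2,5,6,7)] .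
  have y: "y \<in> A" using assms(1,7) by blast
  then have "\<alpha> (g [^] m) ((p ^^ (k * m)) y) = y" using m(2) funpow_twisted assms(4) by simp
  then have "\<alpha> (inv (g [^] m)) y = \<alpha> (inv (g [^] m)) (\<alpha> (g [^] m) ((p ^^ (k * m)) y))" by simp
  also have "\<dots> = (p ^^ (k * m)) y" using funpow_p_closed[OF y] assms(4) by simp
  finally have "(p ^^ (k * m)) y = \<alpha> (inv (g [^] m)) y" ..
  moreover have "k * m > 0" using assms(3) m(1) by simp
  ultimately show ?thesis using assms(4) unfolding orbit_periodic_def by blast
qed

end

section \<open>Combinatorial maps that are bijective on cells\<close>

lemma cmapD:
  assumes "cmap X Y \<phi>"
  shows "mv \<phi> ` cx_V X \<subseteq> cx_V Y" "me \<phi> ` cx_E X \<subseteq> cx_E Y"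
    "mf \<phi> ` cx_F X \<subseteq> cx_F Y" "ms \<phi> ` cx_S X \<subseteq> cx_S Y"
    "\<And>e. e \<in> cx_E X \<Longrightarrow> cx_src Y (me \<phi> e) = mv \<phi> (cx_src X e)"
    "\<And>e. e \<in> cx_E X \<Longrightarrow> me \<phi> (cx_rv X e) = cx_rv Y (me \<phi> e)"
    "\<And>s. s \<in> cx_S X \<Longrightarrow> cx_fc Y (ms \<phi> s) = mf \<phi> (cx_fc X s)"
    "\<And>s. s \<in> cx_S X \<Longrightarrow> ms \<phi> (cx_nx X s) = cx_nx Y (ms \<phi> s)"
    "\<And>s. s \<in> cx_S X \<Longrightarrow> ms \<phi> (cx_fl X s) = cx_fl Y (ms \<phi> s)"
    "\<And>s. s \<in> cx_S X \<Longrightarrow> cx_lb Y (ms \<phi> s) = me \<phi> (cx_lb X s)"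
    "\<And>f. f \<in> cx_F X \<Longrightarrow> bij_betw (ms \<phi>) {s\<in>cx_S X. cx_fc X s = f} {t\<in>cx_S Y. cx_fc Y t = mf \<phi> f}"
  using assms unfolding cmap_def by auto

lemma complex2D:
  assumes "complex2 X"
  shows "\<And>e. e \<in> cx_E X \<Longrightarrow> cx_rv X e \<in> cx_E X"
    "\<And>e. e \<in> cx_E X \<Longrightarrow> cx_src X e \<in> cx_V X"
    "\<And>s. s \<in> cx_S X \<Longrightarrow> cx_fc X s \<in> cx_F X"
    "\<And>s. s \<in> cx_S X \<Longrightarrow> cx_lb X s \<in> cx_E X"
    "\<And>f. f \<in> cx_F X \<Longrightarrow> \<exists>s\<in>cx_S X. cx_fc X s = f"
    "\<And>s. s \<in> cx_S X \<Longrightarrow> cx_nx X s \<in> cx_S X"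
    "\<And>s. s \<in> cx_S X \<Longrightarrow> cx_fl X s \<in> cx_S X"
  using assms unfolding complex2_def by blast+

lemma cmap_tgt:
  assumes "cmap X Y \<phi>" "complex2 X" "e \<in> cx_E X"
  shows "cx_tgt Y (me \<phi> e) = mv \<phi> (cx_tgt X e)"
  using cmapD(5)[OF assms(1)] complex2D(1)[OF assms(2)] assms(3)
  by (simp add: cx_tgt_def flip: cmapD(6)[OF assms(1)])

lemma inj_on_sides_if_immersion:
  assumes imm: "immersion X Y \<phi>" and X: "complex2 X" and inj: "inj_on (me \<phi>) (cx_E X)"
  shows "inj_on (ms \<phi>) (cx_S X)"
proof (rule inj_onI)
  fix s\<^sub>1 s\<^sub>2 assume s: "s\<^sub>1 \<in> cx_S X" "s\<^sub>2 \<in> cx_S X" "ms \<phi> s\<^sub>1 = ms \<phi> s\<^sub>2"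
  have \<phi>: "cmap X Y \<phi>" using imm unfolding immersion_def by blast
  have "me \<phi> (cx_lb X s\<^sub>1) = me \<phi> (cx_lb X s\<^sub>2)"
    using cmapD(10)[OF \<phi> s(1)] cmapD(10)[OF \<phi> s(2)] s(3) by simp
  then have lb: "cx_lb X s\<^sub>1 = cx_lb X s\<^sub>2"
    using inj_onD[OF inj] complex2D(4)[OF X] s(1,2) by blast
  have "cx_src X (cx_lb X s\<^sub>1) \<in> cx_V X" using complex2D(2,4)[OF X] s(1) by blast
  then have "inj_on (ms \<phi>) {s \<in> cx_S X. cx_src X (cx_lb X s) = cx_src X (cx_lb X s\<^sub>1)}"
    using imm unfolding immersion_def by blast
  then show "s\<^sub>1 = s\<^sub>2" using inj_onD s lb by fastforce
qed

lemma inj_on_faces_if_inj_on_sides: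
  assumes \<phi>: "cmap X Y \<phi>" and X: "complex2 X" and inj: "inj_on (ms \<phi>) (cx_S X)"
  shows "inj_on (mf \<phi>) (cx_F X)"
proof (rule inj_onI)
  fix f\<^sub>1 f\<^sub>2 assume f: "f\<^sub>1 \<in> cx_F X" "f\<^sub>2 \<in> cx_F X" "mf \<phi> f\<^sub>1 = mf \<phi> f\<^sub>2"
  obtain s\<^sub>1 where s\<^sub>1: "s\<^sub>1 \<in> cx_S X" "cx_fc X s\<^sub>1 = f\<^sub>1" using complex2D(5)[OF X f(1)] by blast
  have "ms \<phi> s\<^sub>1 \<in> {t \<in> cx_S Y. cx_fc Y t = mf \<phi> f\<^sub>2}"
    using cmapD(4,7)[OF \<phi>] s\<^sub>1 f(3) by auto
  also have "\<dots> = ms \<phi> ` {s \<in> cx_S X. cx_fc X s = f\<^sub>2}"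
    using bij_betw_imp_surj_on[OF cmapD(11)[OF \<phi> f(2)]] by simp
  finally obtain s\<^sub>2 where s\<^sub>2: "s\<^sub>2 \<in> cx_S X" "cx_fc X s\<^sub>2 = f\<^sub>2" "ms \<phi> s\<^sub>2 = ms \<phi> s\<^sub>1"
    by auto
  then have "s\<^sub>2 = s\<^sub>1" using inj_onD[OF inj] s\<^sub>1(1) by blast
  with s\<^sub>1 s\<^sub>2 show "f\<^sub>1 = f\<^sub>2" by simp
qed

lemma sides_image_eq_if_faces_image_eq:
  assumes \<phi>: "cmap X Y \<phi>" and Y: "complex2 Y" and F: "mf \<phi> ` cx_F X = cx_F Y"
  shows "ms \<phi> ` cx_S X = cx_S Y"
proof
  show "ms \<phi> ` cx_S X \<subseteq> cx_S Y" using cmapD(4)[OF \<phi>] .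
  show "cx_S Y \<subseteq> ms \<phi> ` cx_S X"
  proof
    fix t assume t: "t \<in> cx_S Y"
    then have "cx_fc Y t \<in> mf \<phi> ` cx_F X" using complex2D(3)[OF Y] F by simp
    then obtain f where f: "f \<in> cx_F X" "mf \<phi> f = cx_fc Y t" by auto
    then have "t \<in> ms \<phi> ` {s \<in> cx_S X. cx_fc X s = f}"
      using bij_betw_imp_surj_on[OF cmapD(11)[OF \<phi> f(1)]] t by simp
    then show "t \<in> ms \<phi> ` cx_S X" by blast
  qed
qed

lemma cx_iso_if_bij_betw:
  assumes \<phi>: "cmap X Y \<phi>" and X: "complex2 X"
    and V: "bij_betw (mv \<phi>) (cx_V X) (cx_V Y)" and E: "bij_betw (me \<phi>) (cx_E X) (cx_E Y)"
    and F: "bij_betw (mf \<phi>) (cx_F X) (cx_F Y)" and S: "bij_betw (ms \<phi>) (cx_S X) (cx_S Y)"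
  shows "cx_iso X Y \<phi>"
proof -
  define \<psi> where "\<psi> = \<lparr>mv = inv_into (cx_V X) (mv \<phi>), me = inv_into (cx_E X) (me \<phi>),
    mf = inv_into (cx_F X) (mf \<phi>), ms = inv_into (cx_S X) (ms \<phi>)\<rparr>"
  note left_inverse =
    bij_betw_inv_into_left[OF V] bij_betw_inv_into_left[OF E]
    bij_betw_inv_into_left[OF F] bij_betw_inv_into_left[OF S]
  note right_inverse =
    bij_betw_inv_into_right[OF V] bij_betw_inv_into_right[OF E]
    bij_betw_inv_into_right[OF F] bij_betw_inv_into_right[OF S]
  have edges: "cx_src X (me \<psi> t) = mv \<psi> (cx_src Y t) \<and> me \<psi> (cx_rv Y t) = cx_rv X (me \<psi> t)"
    if t: "t \<in> cx_E Y" for t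
  proof -
    obtain e where e: "e \<in> cx_E X" "t = me \<phi> e"
      using t unfolding bij_betw_imp_surj_on[OF E, symmetric] by blast
    then show ?thesis
      using cmapD(5)[OF \<phi> e(1)] cmapD(6)[OF \<phi> e(1), symmetric] complex2D(1,2)[OF X e(1)]
      by (simp add: \<psi>_def left_inverse)
  qed
  have sides: "cx_fc X (ms \<psi> t) = mf \<psi> (cx_fc Y t) \<and> ms \<psi> (cx_nx Y t) = cx_nx X (ms \<psi> t)
      \<and> ms \<psi> (cx_fl Y t) = cx_fl X (ms \<psi> t) \<and> cx_lb X (ms \<psi> t) = me \<psi> (cx_lb Y t)"
    if t: "t \<in> cx_S Y" for t
  proof -
    obtain s where s: "s \<in> cx_S X" "t = ms \<phi> s"
      using t unfolding bij_betw_imp_surj_on[OF S, symmetric] by blast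
    then show ?thesis
      using cmapD(7,10)[OF \<phi> s(1)] cmapD(8,9)[OF \<phi> s(1), symmetric] complex2D(3,4,6,7)[OF X s(1)]
      by (simp add: \<psi>_def left_inverse)
  qed
  have faces: "bij_betw (ms \<psi>) {t \<in> cx_S Y. cx_fc Y t = f'} {s \<in> cx_S X. cx_fc X s = mf \<psi> f'}"
    if f': "f' \<in> cx_F Y" for f'
  proof -
    obtain f where f: "f \<in> cx_F X" "f' = mf \<phi> f"
      using f' unfolding bij_betw_imp_surj_on[OF F, symmetric] by blast
    then show ?thesis
      using bij_betw_inv_into_subset[OF S _ bij_betw_imp_surj_on[OF cmapD(11)[OF \<phi> f(1)]]]
      by (simp add: \<psi>_def left_inverse)
  qed
  have "cmap Y X \<psi>"
    unfolding cmap_def using edges sides faces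
    by (simp add: \<psi>_def bij_betw_imp_surj_on[OF bij_betw_inv_into] V E F S)
  moreover have "agree_on X (hcomp \<psi> \<phi>) hid" "agree_on Y (hcomp \<phi> \<psi>) hid"
    by (simp_all add: agree_on_def hcomp_def hid_def \<psi>_def left_inverse right_inverse)
  ultimately show ?thesis unfolding cx_iso_def using \<phi> by blast
qed

section \<open>Equivariant immersions\<close>

locale equivariant_immersion =
  fixes G :: "('g,'x) monoid_scheme" and X :: "('v,'e,'f,'s) cplx"
    and act :: "'g \<Rightarrow> ('v,'e,'f,'s,'v,'e,'f,'s) cmor"
    and \<phi> :: "('v,'e,'f,'s,'v,'e,'f,'s) cmor"
  assumes G_complex: "G_complex G X act" and connected: "cx_connected X"
    and proper: "proper_action G X act" and cocompact: "cocompact_action G X act"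
    and equivariant: "equivariant G X act \<phi>" and immersion: "immersion X X \<phi>"
begin

lemma group: "group G"
  using G_complex unfolding G_complex_def by blast

lemma complex2: "complex2 X"
  using G_complex unfolding G_complex_def by blast

lemma cmap_act: "g \<in> carrier G \<Longrightarrow> cmap X X (act g)"
  using G_complex unfolding G_complex_def by blast

lemma cmap_\<phi>: "cmap X X \<phi>"
  using immersion unfolding immersion_def by blast

lemmas action_facts = G_complex[unfolded G_complex_def cmap_def] proper[unfolded proper_action_def]
  cocompact[unfolded cocompact_action_def] equivariant[unfolded equivariant_def]
  cmap_\<phi>[unfolded cmap_def]

sublocale V: equivariant_endo G "cx_V X" "\<lambda>g. mv (act g)" "mv \<phi>"
  by (intro equivariant_endo.intro proper_cocompact_act.intro group_act.intro group
      equivariant_endo_axioms.intro proper_cocompact_act_axioms.intro group_act_axioms.intro)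
    (use action_facts in \<open>auto simp: agree_on_def hcomp_def hid_def image_subset_iff\<close>)

sublocale E: equivariant_endo G "cx_E X" "\<lambda>g. me (act g)" "me \<phi>"
  by (intro equivariant_endo.intro proper_cocompact_act.intro group_act.intro group
      equivariant_endo_axioms.intro proper_cocompact_act_axioms.intro group_act_axioms.intro)
    (use action_facts in \<open>auto simp: agree_on_def hcomp_def hid_def image_subset_iff\<close>)

sublocale F: equivariant_endo G "cx_F X" "\<lambda>g. mf (act g)" "mf \<phi>"
  by (intro equivariant_endo.intro proper_cocompact_act.intro group_act.intro group
      equivariant_endo_axioms.intro proper_cocompact_act_axioms.intro group_act_axioms.intro)
    (use action_facts in \<open>auto simp: agree_on_def hcomp_def hid_def image_subset_iff\<close>)

definition star :: "'v \<Rightarrow> 'e set" where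
  "star v = {e \<in> cx_E X. cx_src X e = v}"

lemma finite_star: "v \<in> cx_V X \<Longrightarrow> finite (star v)"
  unfolding star_def
  by (rule finite_fibre_if_equivariant[OF E.proper_cocompact_act_axioms V.proper_cocompact_act_axioms])
    (use complex2D(2)[OF complex2] cmapD(5)[OF cmap_act] in auto)

lemma src_funpow: "e \<in> cx_E X \<Longrightarrow> cx_src X ((me \<phi> ^^ n) e) = (mv \<phi> ^^ n) (cx_src X e)"
  by (induction n) (auto simp: cmapD(5)[OF cmap_\<phi>] E.funpow_p_closed)

lemma tgt_funpow: "e \<in> cx_E X \<Longrightarrow> cx_tgt X ((me \<phi> ^^ n) e) = (mv \<phi> ^^ n) (cx_tgt X e)"
  by (induction n) (auto simp: cmap_tgt[OF cmap_\<phi> complex2] E.funpow_p_closed)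

lemma funpow_star_subset: "(me \<phi> ^^ n) ` star v \<subseteq> star ((mv \<phi> ^^ n) v)"
  unfolding star_def using src_funpow E.funpow_p_closed by auto

lemma inj_on_star: "v \<in> cx_V X \<Longrightarrow> inj_on (me \<phi>) (star v)"
  using immersion unfolding immersion_def star_def by blast

lemma inj_on_funpow_star: "v \<in> cx_V X \<Longrightarrow> inj_on (me \<phi> ^^ n) (star v)"
proof (induction n)
  case (Suc n)
  have "inj_on (me \<phi>) ((me \<phi> ^^ n) ` star v)"
    using inj_on_star[OF V.funpow_p_closed[OF Suc.prems]] funpow_star_subset by (rule inj_on_subset)
  then have "inj_on (me \<phi> \<circ> (me \<phi> ^^ n)) (star v)"
    by (rule comp_inj_on[OF Suc.IH[OF Suc.prems]])
  then show ?case by (simp add: comp_def)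
qed simp

lemma orbit_periodic_star:
  assumes v: "v \<in> cx_V X" "V.orbit_periodic v" and e: "e \<in> star v"
  shows "E.orbit_periodic e"
proof -
  obtain k g where kg: "k > 0" "g \<in> carrier G" "(mv \<phi> ^^ k) v = mv (act g) v"
    using v(2) unfolding V.orbit_periodic_def by blast
  have g': "inv\<^bsub>G\<^esub> g \<in> carrier G" using V.inv_closed[OF kg(2)] .
  let ?\<theta> = "\<lambda>e. me (act (inv\<^bsub>G\<^esub> g)) ((me \<phi> ^^ k) e)"
  have "?\<theta> x \<in> star v" if x: "x \<in> star v" for x
  proof -
    have y: "(me \<phi> ^^ k) x \<in> cx_E X" "cx_src X ((me \<phi> ^^ k) x) = mv (act g) v"
      using funpow_star_subset[of k v] x kg(3) unfolding star_def by auto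
    have "cx_src X (?\<theta> x) = mv (act (inv\<^bsub>G\<^esub> g)) (mv (act g) v)"
      using cmapD(5)[OF cmap_act[OF g'] y(1)] y(2) by simp
    also have "\<dots> = v" using V.act_inv_act[OF kg(2) v(1)] .
    finally show ?thesis using E.act_closed[OF g' y(1)] unfolding star_def by simp
  qed
  then have "?\<theta> ` star v \<subseteq> star v" by blast
  moreover have "inj_on ?\<theta> (star v)"
  proof -
    have "(me \<phi> ^^ k) ` star v \<subseteq> cx_E X"
      using E.funpow_p_closed unfolding star_def by blast
    then have "inj_on (me (act (inv\<^bsub>G\<^esub> g))) ((me \<phi> ^^ k) ` star v)"
      by (rule inj_on_subset[OF E.inj_on_act[OF g']])
    then have "inj_on (me (act (inv\<^bsub>G\<^esub> g)) \<circ> (me \<phi> ^^ k)) (star v)"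
      by (rule comp_inj_on[OF inj_on_funpow_star[OF v(1)]])
    then show ?thesis by (simp add: comp_def)
  qed
  moreover have "star v \<subseteq> cx_E X" unfolding star_def by blast
  ultimately show ?thesis
    using E.orbit_periodic_if_twisted_permutes[OF _ finite_star[OF v(1)] kg(1) g' _ _ e] by blast
qed

lemma orbit_periodic_tgt:
  assumes "e \<in> cx_E X" "E.orbit_periodic e"
  shows "V.orbit_periodic (cx_tgt X e)"
proof -
  obtain k g where kg: "k > 0" "g \<in> carrier G" "(me \<phi> ^^ k) e = me (act g) e"
    using assms(2) unfolding E.orbit_periodic_def by blast
  have "(mv \<phi> ^^ k) (cx_tgt X e) = cx_tgt X ((me \<phi> ^^ k) e)"
    using tgt_funpow[OF assms(1)] by simp
  also have "\<dots> = mv (act g) (cx_tgt X e)"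
    using kg(2,3) cmap_tgt[OF cmap_act complex2 assms(1)] by simp
  finally show ?thesis using kg(1,2) unfolding V.orbit_periodic_def by blast
qed

lemma orbit_periodic_vertex:
  assumes v: "v \<in> cx_V X"
  shows "V.orbit_periodic v"
proof -
  obtain i where start: "V.orbit_periodic ((mv \<phi> ^^ i) v)"
    using V.eventually_orbit_periodic[OF v] .
  have "((mv \<phi> ^^ i) v, v) \<in> {(cx_src X e, cx_tgt X e) | e. e \<in> cx_E X}\<^sup>*"
    using connected V.funpow_p_closed v unfolding cx_connected_def by blast
  then show ?thesis
  proof (induction rule: rtrancl_induct)
    case (step y z)
    then obtain e where e: "e \<in> cx_E X" "y = cx_src X e" "z = cx_tgt X e" by blast
    then have "E.orbit_periodic e"
      using orbit_periodic_star[of y e] step.IH complex2D(2)[OF complex2] unfolding star_def by blast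
    then show ?case using orbit_periodic_tgt e by blast
  qed (rule start)
qed

lemma orbit_periodic_edge: "e \<in> cx_E X \<Longrightarrow> E.orbit_periodic e"
  using orbit_periodic_star orbit_periodic_vertex complex2D(2)[OF complex2] unfolding star_def by blast

lemma bij_betw_vertices: "bij_betw (mv \<phi>) (cx_V X) (cx_V X)"
  using V.inj_on_if_orbit_periodic V.image_eq_if_orbit_periodic orbit_periodic_vertex
  unfolding bij_betw_def by blast

lemma bij_betw_edges: "bij_betw (me \<phi>) (cx_E X) (cx_E X)"
  using E.inj_on_if_orbit_periodic E.image_eq_if_orbit_periodic orbit_periodic_edge
  unfolding bij_betw_def by blast

end

theorem lemma6p10:
  fixes G :: "('g,'x) monoid_scheme"
    and X :: "('v,'e,'f,'s) cplx"
    and act :: "'g \<Rightarrow> ('v,'e,'f,'s,'v,'e,'f,'s) cmor"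
    and \<phi> :: "('v,'e,'f,'s,'v,'e,'f,'s) cmor"
  assumes "G_complex G X act"
    and "cx_connected X"
    and "proper_action G X act"
    and "cocompact_action G X act"
    and "equivariant G X act \<phi>"
    and "immersion X X \<phi>"
  shows "cx_iso X X \<phi>"
proof -
  interpret equivariant_immersion G X act \<phi>
    using assms by unfold_locales
  have inj_sides: "inj_on (ms \<phi>) (cx_S X)"
    using inj_on_sides_if_immersion immersion complex2 bij_betw_imp_inj_on[OF bij_betw_edges] .
  then have "inj_on (mf \<phi>) (cx_F X)"
    by (rule inj_on_faces_if_inj_on_sides[OF cmap_\<phi> complex2])
  then have faces: "bij_betw (mf \<phi>) (cx_F X) (cx_F X)"
    using F.image_eq_if_inj_on unfolding bij_betw_def by blast
  have sides: "bij_betw (ms \<phi>) (cx_S X) (cx_S X)"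
    using inj_sides sides_image_eq_if_faces_image_eq[OF cmap_\<phi> complex2] bij_betw_imp_surj_on[OF faces]
    unfolding bij_betw_def by blast
  show ?thesis
    using cx_iso_if_bij_betw[OF cmap_\<phi> complex2 bij_betw_vertices bij_betw_edges faces sides] .
qed

end
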